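(* Let $R$ be an abelian Rickart $*$-ring and $a_1,a_2,b_1,b_2\in R$ with $a_1\perp a_2$, $b_1\perp b_2$, $a_1\sim b_1$ and $a_2\sim b_2$. Then $a_1+a_2\sim b_1+b_2$.
   Context: A Rickart $*$-ring is a $*$-ring in which the right annihilator of every element is generated as a right ideal by a projection ($e=e^2=e^*$); it has unity. Abelian: all idempotents central. Orthogonality: $a\perp b$ iff there is $x\in R$ with $xa=a=ax^*$ and $xb=0=bx^*$. Equivalence: $a\sim b$ iff there exist $x,y\in R$ with $aa^*=xx^*$, $bb^*=yy^*$, $a^*a=y^*y$, $b^*b=x^*x$, $x=ax=xb$, $y=by=ya$. *)

theory Defs
  imports Main
begin

class star_ring = ring_1 +
  fixes star :: "'a \<Rightarrow> 'a"
  assumes star_add: "star (x + y) = star x + star y"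
    and star_mult: "star (x * y) = star y * star x"
    and star_star: "star (star x) = x"

definition projection :: "'a::star_ring \<Rightarrow> bool" where
  "projection e \<longleftrightarrow> e * e = e \<and> star e = e"

definition right_annihilator :: "'a::ring_1 \<Rightarrow> 'a set" where
  "right_annihilator x = {y. x * y = 0}"

definition rickart_star_ring :: "'a::star_ring itself \<Rightarrow> bool" where
  "rickart_star_ring TYPE('a) \<longleftrightarrow>
     (\<forall>x::'a. \<exists>e. projection e \<and> right_annihilator x = {e * r | r. True})"

definition abelian_ring :: "'a::ring_1 itself \<Rightarrow> bool" where
  "abelian_ring TYPE('a) \<longleftrightarrow> (\<forall>e::'a. e * e = e \<longrightarrow> (\<forall>r. e * r = r * e))"

definition orth :: "'a::star_ring \<Rightarrow> 'a \<Rightarrow> bool" where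
  "orth a b \<longleftrightarrow> (\<exists>x. x * a = a \<and> a = a * star x \<and> x * b = 0 \<and> b * star x = 0)"

definition star_equiv :: "'a::star_ring \<Rightarrow> 'a \<Rightarrow> bool" where
  "star_equiv a b \<longleftrightarrow> (\<exists>x y. a * star a = x * star x \<and> b * star b = y * star y \<and>
      star a * a = star y * y \<and> star b * b = star x * x \<and>
      x = a * x \<and> x = x * b \<and> y = b * y \<and> y = y * a)"

end

theory Submission
  imports Defs
begin

text \<open>In an abelian Rickart *-ring, orthogonality of \<open>a\<close> and \<open>b\<close> is witnessed by a central
projection \<open>e\<close> with \<open>e a = 0\<close> and \<open>e b = b\<close>: take the projection generating the right
annihilator of the element \<open>x\<close> from the definition of \<open>a \<perp> b\<close>. A central self-adjoint \<open>e\<close>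
splits the ring into two corners, and products of elements from different corners vanish,
with or without stars. The witnesses \<open>x, y\<close> of \<open>a \<sim> b\<close> lie in \<open>aR \<inter> Rb\<close> and \<open>bR \<inter> Ra\<close>,
so they lie in the corners of \<open>a\<close> and of \<open>b\<close>. Therefore the sums of the witnesses of
\<open>a\<^sub>1 \<sim> b\<^sub>1\<close> and \<open>a\<^sub>2 \<sim> b\<^sub>2\<close> witness \<open>a\<^sub>1 + a\<^sub>2 \<sim> b\<^sub>1 + b\<^sub>2\<close>, since all cross terms vanish.\<close>

lemma star_zero [simp]: "star (0::'a::star_ring) = 0"
  by (metis add_cancel_right_right star_add)

lemma orth_imp_central_projection:
  fixes a b :: "'a::star_ring"
  assumes "rickart_star_ring TYPE('a)" and "abelian_ring TYPE('a)" and "orth a b"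
  obtains e where "projection e" "\<And>r. e * r = r * e" "e * a = 0" "e * b = b"
proof -
  obtain u where u: "u * a = a" "u * b = 0"
    using assms(3) unfolding orth_def by blast
  obtain e where e: "projection e" and ann: "right_annihilator u = {e * r | r. True}"
    using assms(1) unfolding rickart_star_ring_def by blast
  have idem: "e * e = e"
    using e unfolding projection_def by simp
  have central: "e * r = r * e" for r
    using assms(2) idem unfolding abelian_ring_def by blast
  have "b \<in> right_annihilator u"
    using u unfolding right_annihilator_def by simp
  then obtain r where "b = e * r"
    using ann by blast
  then have "e * b = b"
    using idem by (metis mult.assoc)
  have "e \<in> right_annihilator u"
    using ann by (metis (mono_tags, lifting) mem_Collect_eq mult_1_right)
  then have "u * e = 0"
    unfolding right_annihilator_def by simp
  then have "e * a = 0"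
    using u central by (metis mult.assoc mult_zero_left)
  show thesis
    using that e central \<open>e * a = 0\<close> \<open>e * b = b\<close> by blast
qed

lemma central_selfadjoint_star_annihilated:
  fixes e p :: "'a::star_ring"
  assumes "\<And>r. e * r = r * e" "star e = e" "e * p = 0"
  shows "e * star p = 0"
  by (metis assms star_mult star_zero)

lemma central_selfadjoint_star_fixed:
  fixes e q :: "'a::star_ring"
  assumes "\<And>r. e * r = r * e" "star e = e" "e * q = q"
  shows "e * star q = star q"
  by (metis assms star_mult)

lemma central_separated_products:
  fixes e p q :: "'a::ring_1"
  assumes "\<And>r. e * r = r * e" "e * p = 0" "e * q = q"
  shows "p * q = 0" "q * p = 0"
proof -
  have "p * q = (e * p) * q"
    using assms by (metis mult.assoc)
  then show "p * q = 0"
    using assms(2) by simp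
  have "q * p = q * (e * p)"
    using assms by (metis mult.assoc)
  then show "q * p = 0"
    using assms(2) by simp
qed

lemma central_separated_star_products:
  fixes e p q :: "'a::star_ring"
  assumes "\<And>r. e * r = r * e" "star e = e" "e * p = 0" "e * q = q"
  shows "p * q = 0" "q * p = 0" "star p * q = 0" "q * star p = 0"
    "p * star q = 0" "star q * p = 0"
  using central_separated_products[OF assms(1)] assms
    central_selfadjoint_star_annihilated[OF assms(1,2)]
    central_selfadjoint_star_fixed[OF assms(1,2)]
  by metis+

lemma left_factor_annihilated:
  fixes e a x :: "'a::ring_1"
  assumes "e * a = 0" "a * x = x"
  shows "e * x = 0"
  by (metis assms mult.assoc mult_zero_left)

lemma left_factor_fixed:
  fixes e a x :: "'a::ring_1"
  assumes "e * a = a" "a * x = x"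
  shows "e * x = x"
  by (metis assms mult.assoc)

lemma right_factor_annihilated:
  fixes e b x :: "'a::ring_1"
  assumes "\<And>r. e * r = r * e" "e * b = 0" "x * b = x"
  shows "e * x = 0"
  by (metis assms mult.assoc mult_zero_right)

lemma right_factor_fixed:
  fixes e b x :: "'a::ring_1"
  assumes "\<And>r. e * r = r * e" "e * b = b" "x * b = x"
  shows "e * x = x"
  by (metis assms mult.assoc)

lemma star_equiv_add_separated:
  fixes a1 a2 b1 b2 e f :: "'a::star_ring"
  assumes ce: "\<And>r. e * r = r * e" and se: "star e = e"
    and ea1: "e * a1 = 0" and ea2: "e * a2 = a2"
    and cf: "\<And>r. f * r = r * f" and sf: "star f = f"
    and fb1: "f * b1 = 0" and fb2: "f * b2 = b2"
    and "star_equiv a1 b1" and "star_equiv a2 b2"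
  shows "star_equiv (a1 + a2) (b1 + b2)"
proof -
  obtain x1 y1 where q1: "a1 * star a1 = x1 * star x1" "b1 * star b1 = y1 * star y1"
      "star a1 * a1 = star y1 * y1" "star b1 * b1 = star x1 * x1"
      "a1 * x1 = x1" "x1 * b1 = x1" "b1 * y1 = y1" "y1 * a1 = y1"
    using \<open>star_equiv a1 b1\<close> unfolding star_equiv_def by metis
  obtain x2 y2 where q2: "a2 * star a2 = x2 * star x2" "b2 * star b2 = y2 * star y2"
      "star a2 * a2 = star y2 * y2" "star b2 * b2 = star x2 * x2"
      "a2 * x2 = x2" "x2 * b2 = x2" "b2 * y2 = y2" "y2 * a2 = y2"
    using \<open>star_equiv a2 b2\<close> unfolding star_equiv_def by metis
  have e_corners: "e * x1 = 0" "e * x2 = x2" "e * y1 = 0" "e * y2 = y2"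
    using left_factor_annihilated[OF ea1 q1(5)] left_factor_fixed[OF ea2 q2(5)]
      right_factor_annihilated[OF ce ea1 q1(8)] right_factor_fixed[OF ce ea2 q2(8)] .
  have f_corners: "f * x1 = 0" "f * x2 = x2" "f * y1 = 0" "f * y2 = y2"
    using right_factor_annihilated[OF cf fb1 q1(6)] right_factor_fixed[OF cf fb2 q2(6)]
      left_factor_annihilated[OF fb1 q1(7)] left_factor_fixed[OF fb2 q2(7)] .
  note e_cross = central_separated_star_products[OF ce se]
  note f_cross = central_separated_star_products[OF cf sf]
  have cross_terms:
    "a1 * star a2 = 0" "a2 * star a1 = 0" "x1 * star x2 = 0" "x2 * star x1 = 0"
    "b1 * star b2 = 0" "b2 * star b1 = 0" "y1 * star y2 = 0" "y2 * star y1 = 0"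
    "star a1 * a2 = 0" "star a2 * a1 = 0" "star y1 * y2 = 0" "star y2 * y1 = 0"
    "star b1 * b2 = 0" "star b2 * b1 = 0" "star x1 * x2 = 0" "star x2 * x1 = 0"
    "a1 * x2 = 0" "a2 * x1 = 0" "x1 * b2 = 0" "x2 * b1 = 0"
    "b1 * y2 = 0" "b2 * y1 = 0" "y1 * a2 = 0" "y2 * a1 = 0"
    using e_cross[OF ea1 ea2] e_cross[OF e_corners(1,2)] e_cross[OF e_corners(3,4)]
      e_cross[OF ea1 e_corners(2)] e_cross[OF e_corners(1) ea2]
      e_cross[OF e_corners(3) ea2] e_cross[OF ea1 e_corners(4)]
      f_cross[OF fb1 fb2] f_cross[OF f_corners(1,2)] f_cross[OF f_corners(3,4)]
      f_cross[OF f_corners(1) fb2] f_cross[OF fb1 f_corners(2)]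
      f_cross[OF fb1 f_corners(4)] f_cross[OF f_corners(3) fb2]
    by auto
  show ?thesis
    unfolding star_equiv_def
    by (rule exI[of _ "x1 + x2"], rule exI[of _ "y1 + y2"])
      (simp add: star_add distrib_left distrib_right cross_terms q1 q2)
qed

theorem mainTheorem14:
  fixes a1 a2 b1 b2 :: "'a::star_ring"
  assumes "rickart_star_ring TYPE('a)"
    and "abelian_ring TYPE('a)"
    and "orth a1 a2" and "orth b1 b2"
    and "star_equiv a1 b1" and "star_equiv a2 b2"
  shows "star_equiv (a1 + a2) (b1 + b2)"
proof -
  obtain e where "projection e" "\<And>r. e * r = r * e" "e * a1 = 0" "e * a2 = a2"
    using orth_imp_central_projection[OF assms(1,2,3)] by blast
  moreover obtain f where "projection f" "\<And>r. f * r = r * f" "f * b1 = 0" "f * b2 = b2"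
    using orth_imp_central_projection[OF assms(1,2,4)] by blast
  ultimately show ?thesis
    using star_equiv_add_separated assms(5,6) unfolding projection_def by metis
qed

end
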